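(* Let $N$ be a binoid and let $$\infty\to S_1\xrightarrow{\phi_2}S_2\xrightarrow{\phi_3}\cdots\xrightarrow{\phi_n}S_n\to\infty$$ be a strongly exact sequence of finite $N$-sets. Then $\sum_{i=1}^n(-1)^i\,\#S_i=0$.
   Context: A binoid $(N,+,0,\infty)$ is a commutative monoid $(N,+,0)$ with an element $\infty$ satisfying $a+\infty=\infty$ for all $a\in N$. An $N$-set is a pointed set $(S,p)$ with a map $N\times S\to S$, $(n,s)\mapsto n+s$, such that $(n+m)+s=n+(m+s)$, $0+s=s$, $\infty+s=p$ and $n+p=p$; a homomorphism of $N$-sets is a map $\phi$ with $\phi(p)=p$ and $\phi(n+s)=n+\phi(s)$. Its image is $\operatorname{im}\phi=\phi(S)$ and its kernel is $\ker\phi=\phi^{-1}(p)$. The symbol $\infty$ at the ends denotes the one-point $N$-set. A sequence $S_0\xrightarrow{\phi_1}S_1\xrightarrow{\phi_2}\cdots\xrightarrow{\phi_n}S_n$ of $N$-sets is exact if $\operatorname{im}\phi_k=\ker\phi_{k+1}$ for all $k$, and strongly exact if moreover each $\phi_k$ is injective on $S_{k-1}\setminus\ker\phi_k$. For a finite pointed set $S$, $\#S=|S|-1$. *)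

theory Defs
  imports Main
begin

text \<open>A binoid is modelled as a commutative monoid type 'n (with + and 0)
  together with an absorbing element infty.\<close>

definition binoid_inf :: "'n::comm_monoid_add \<Rightarrow> bool" where
  "binoid_inf infty \<longleftrightarrow> (\<forall>a::'n. a + infty = infty)"

definition nset :: "'n::comm_monoid_add \<Rightarrow> 'a set \<Rightarrow> 'a \<Rightarrow> ('n \<Rightarrow> 'a \<Rightarrow> 'a) \<Rightarrow> bool" where
  "nset infty S p act \<longleftrightarrow>
     p \<in> S \<and>
     (\<forall>n. \<forall>s\<in>S. act n s \<in> S) \<and>
     (\<forall>n m. \<forall>s\<in>S. act (n + m) s = act n (act m s)) \<and>
     (\<forall>s\<in>S. act 0 s = s) \<and>
     (\<forall>s\<in>S. act infty s = p) \<and>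
     (\<forall>n. act n p = p)"

definition nset_hom ::
  "'a set \<Rightarrow> 'a \<Rightarrow> ('n \<Rightarrow> 'a \<Rightarrow> 'a) \<Rightarrow> 'b set \<Rightarrow> 'b \<Rightarrow> ('n \<Rightarrow> 'b \<Rightarrow> 'b) \<Rightarrow> ('a \<Rightarrow> 'b) \<Rightarrow> bool" where
  "nset_hom S p act T q act' \<phi> \<longleftrightarrow>
     (\<forall>s\<in>S. \<phi> s \<in> T) \<and> \<phi> p = q \<and> (\<forall>n. \<forall>s\<in>S. \<phi> (act n s) = act' n (\<phi> s))"

definition nker :: "'a set \<Rightarrow> 'b \<Rightarrow> ('a \<Rightarrow> 'b) \<Rightarrow> 'a set" where
  "nker S q \<phi> = {s \<in> S. \<phi> s = q}"

text \<open>A sequence S 0 --phi 1--> S 1 --> ... --phi m--> S m; the map phi k goes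
  from S (k-1) to S k. Exactness: im phi k = ker phi (k+1) for 1 <= k < m.\<close>
definition exact_seq :: "nat \<Rightarrow> (nat \<Rightarrow> 'a set) \<Rightarrow> (nat \<Rightarrow> 'a) \<Rightarrow> (nat \<Rightarrow> 'a \<Rightarrow> 'a) \<Rightarrow> bool" where
  "exact_seq m S p \<phi> \<longleftrightarrow>
     (\<forall>k. 1 \<le> k \<and> k < m \<longrightarrow> \<phi> k ` S (k - 1) = nker (S k) (p (k + 1)) (\<phi> (k + 1)))"

definition strongly_exact_seq :: "nat \<Rightarrow> (nat \<Rightarrow> 'a set) \<Rightarrow> (nat \<Rightarrow> 'a) \<Rightarrow> (nat \<Rightarrow> 'a \<Rightarrow> 'a) \<Rightarrow> bool" where
  "strongly_exact_seq m S p \<phi> \<longleftrightarrow>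
     exact_seq m S p \<phi> \<and>
     (\<forall>k. 1 \<le> k \<and> k \<le> m \<longrightarrow> inj_on (\<phi> k) (S (k - 1) - nker (S (k - 1)) (p k) (\<phi> k)))"

end

theory Submission
  imports Defs
begin

text \<open>Each #S_i splits as #(im \<phi>_i) + #(im \<phi>_(i+1)): strong exactness makes \<phi>_(i+1) a bijection
  from S_i minus its kernel onto its image minus the base point, and the kernel is im \<phi>_i.
  The alternating sum therefore telescopes, and both end terms vanish because
  S_0 and S_(n+1) are single points.\<close>

lemma alternating_sum_telescope:
  fixes a :: "nat \<Rightarrow> int"
  assumes "n \<ge> 1"
  shows "(\<Sum>i = 1..n. (-1) ^ i * (a i + a (Suc i))) = - a 1 + (-1) ^ n * a (Suc n)"
  using assms
proof (induction n rule: dec_induct)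
  case base
  then show ?case by simp
next
  case (step m)
  then show ?case by (simp add: algebra_simps)
qed

lemma card_kernel_plus_card_image:
  assumes "finite A" and "a \<in> A" and "f a = q"
    and "inj_on f (A - {s \<in> A. f s = q})"
  shows "int (card A) - 1 = (int (card {s \<in> A. f s = q}) - 1) + (int (card (f ` A)) - 1)"
proof -
  let ?K = "{s \<in> A. f s = q}"
  have "card A = card ?K + card (A - ?K)"
    using \<open>finite A\<close> by (simp add: card_Diff_subset card_mono)
  moreover have "f ` A = insert q (f ` (A - ?K))" and "q \<notin> f ` (A - ?K)"
    using assms(2,3) by auto
  then have "card (f ` A) = Suc (card (A - ?K))"
    using assms(1,4) by (simp add: card_image)
  ultimately show ?thesis by simp
qed

lemma strongly_exact_seq_card_split:
  assumes "strongly_exact_seq m S p \<phi>"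
    and "1 \<le> i" "i < m" "finite (S i)" "p i \<in> S i" "\<phi> (Suc i) (p i) = p (Suc i)"
  shows "int (card (S i)) - 1 =
    (int (card (\<phi> i ` S (i - 1))) - 1) + (int (card (\<phi> (Suc i) ` S i)) - 1)"
proof -
  have "\<phi> i ` S (i - 1) = {s \<in> S i. \<phi> (Suc i) s = p (Suc i)}"
    and "inj_on (\<phi> (Suc i)) (S i - {s \<in> S i. \<phi> (Suc i) s = p (Suc i)})"
    using assms(1-3) unfolding strongly_exact_seq_def exact_seq_def nker_def
    by (auto dest: spec[of _ "Suc i"])
  then show ?thesis
    using card_kernel_plus_card_image[of "S i" "p i" "\<phi> (Suc i)" "p (Suc i)"] assms(4-6) by simp
qed

theorem mainTheorem16:
  fixes infty :: "'n::comm_monoid_add"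
    and n :: nat
    and S :: "nat \<Rightarrow> 'a set" and p :: "nat \<Rightarrow> 'a"
    and act :: "nat \<Rightarrow> 'n \<Rightarrow> 'a \<Rightarrow> 'a"
    and \<phi> :: "nat \<Rightarrow> 'a \<Rightarrow> 'a"
  assumes "binoid_inf infty"
    and "n \<ge> 1"
    and "\<And>i. i \<le> n + 1 \<Longrightarrow> nset infty (S i) (p i) (act i)"
    and "\<And>i. i \<le> n + 1 \<Longrightarrow> finite (S i)"
    and "S 0 = {p 0}"
    and "S (n + 1) = {p (n + 1)}"
    and "\<And>k. 1 \<le> k \<Longrightarrow> k \<le> n + 1 \<Longrightarrow>
           nset_hom (S (k - 1)) (p (k - 1)) (act (k - 1)) (S k) (p k) (act k) (\<phi> k)"
    and "strongly_exact_seq (n + 1) S p \<phi>"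
  shows "(\<Sum>i = 1..n. (-1::int) ^ i * (int (card (S i)) - 1)) = 0"
proof -
  define a where "a k = int (card (\<phi> k ` S (k - 1))) - 1" for k
  have base_point: "p i \<in> S i" if "i \<le> n + 1" for i
    using assms(3)[OF that] unfolding nset_def by simp
  have hom: "\<phi> (Suc i) ` S i \<subseteq> S (Suc i)" "\<phi> (Suc i) (p i) = p (Suc i)" if "i \<le> n" for i
    using assms(7)[of "Suc i"] that unfolding nset_hom_def by auto
  have "int (card (S i)) - 1 = a i + a (Suc i)" if "1 \<le> i" "i \<le> n" for i
    unfolding a_def using strongly_exact_seq_card_split[OF assms(8)] that assms(4) base_point hom
    by simp
  then have "(\<Sum>i = 1..n. (-1::int) ^ i * (int (card (S i)) - 1))
      = (\<Sum>i = 1..n. (-1) ^ i * (a i + a (Suc i)))"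
    by (intro sum.cong) auto
  also have "\<dots> = - a 1 + (-1) ^ n * a (Suc n)"
    using alternating_sum_telescope[OF assms(2)] .
  also have "\<dots> = 0"
  proof -
    have "\<phi> (Suc n) ` S n = {p (Suc n)}"
      using assms(6) hom[of n] base_point[of n] by force
    then show ?thesis
      using assms(5) unfolding a_def by simp
  qed
  finally show ?thesis .
qed

end
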